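(* Let $\mathbb{X}\subseteq\mathbb{P}^2$ be a $\Bbbk$-configuration of type $(d_1,\dots,d_s)$ with $s\ge2$. Then there exist subsets $\mathbb{X}_1,\dots,\mathbb{X}_s$ and lines $\mathbb{L}_1,\dots,\mathbb{L}_s$ defining $\mathbb{X}$ as a $\Bbbk$-configuration of type $(d_1,\dots,d_s)$, and an integer $r$ with $1\le r\le s$, such that $|\mathbb{L}_{s-j}\cap\mathbb{X}|=d_s$ for all $0\le j\le r-1$ and $|\mathbb{L}_{s-j}\cap\mathbb{X}|<d_s$ for all $r\le j\le s-1$.
   Context: $\Bbbk$ is an algebraically closed field. A $\Bbbk$-configuration of type $(d_1,\dots,d_s)$ is a finite set $\mathbb{X}\subseteq\mathbb{P}^2$ for which there exist integers $1\le d_1<\cdots<d_s$, subsets $\mathbb{X}_1,\dots,\mathbb{X}_s$ of $\mathbb{X}$ and distinct lines $\mathbb{L}_1,\dots,\mathbb{L}_s\subseteq\mathbb{P}^2$ such that (1) $\mathbb{X}=\bigcup_{i=1}^s\mathbb{X}_i$; (2) $|\mathbb{X}_i|=d_i$ and $\mathbb{X}_i\subseteq\mathbb{L}_i$ for each $i$; (3) for $1<i\le s$, $\mathbb{L}_i$ contains no point of $\mathbb{X}_j$ for any $j<i$. We say $\mathbb{X}$ is defined by these subsets and lines; such defining data need not be unique. *)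

theory Defs
  imports "HOL-Computational_Algebra.Polynomial"
begin

definition alg_closed :: "'k::field itself \<Rightarrow> bool" where
  "alg_closed _ \<longleftrightarrow> (\<forall>p :: 'k poly. degree p \<ge> 1 \<longrightarrow> (\<exists>x. poly p x = 0))"

type_synonym 'k vec3 = "'k \<times> 'k \<times> 'k"

definition sc3 :: "'k::field \<Rightarrow> 'k vec3 \<Rightarrow> 'k vec3" where
  "sc3 c v = (c * fst v, c * fst (snd v), c * snd (snd v))"

definition proj_class :: "'k::field vec3 \<Rightarrow> 'k vec3 set" where
  "proj_class v = {sc3 c v | c. c \<noteq> 0}"

typedef (overloaded) ('k::field) ppoint = "{S :: 'k vec3 set. \<exists>v. v \<noteq> (0,0,0) \<and> S = proj_class v}"
  by (rule exI[of _ "proj_class (1,0,0)"]) (rule CollectI, rule exI[of _ "(1,0,0)"], simp)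

definition dot3 :: "'k::field vec3 \<Rightarrow> 'k vec3 \<Rightarrow> 'k" where
  "dot3 a v = fst a * fst v + fst (snd a) * fst (snd v) + snd (snd a) * snd (snd v)"

definition is_line :: "'k::field ppoint set \<Rightarrow> bool" where
  "is_line L \<longleftrightarrow> (\<exists>a. a \<noteq> (0,0,0) \<and> L = {P. \<exists>v \<in> Rep_ppoint P. dot3 a v = 0})"

definition config_type :: "(nat \<Rightarrow> nat) \<Rightarrow> nat \<Rightarrow> bool" where
  "config_type d s \<longleftrightarrow> 1 \<le> d 1 \<and> (\<forall>i j. 1 \<le> i \<longrightarrow> i < j \<longrightarrow> j \<le> s \<longrightarrow> d i < d j)"

definition defines_config ::
  "'k::field ppoint set \<Rightarrow> (nat \<Rightarrow> nat) \<Rightarrow> nat \<Rightarrow> (nat \<Rightarrow> 'k ppoint set) \<Rightarrow> (nat \<Rightarrow> 'k ppoint set) \<Rightarrow> bool" where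
  "defines_config X d s Xs Ls \<longleftrightarrow>
     config_type d s \<and>
     X = (\<Union>i\<in>{1..s}. Xs i) \<and>
     (\<forall>i\<in>{1..s}. is_line (Ls i) \<and> Xs i \<subseteq> X \<and> finite (Xs i) \<and> card (Xs i) = d i \<and> Xs i \<subseteq> Ls i) \<and>
     inj_on Ls {1..s} \<and>
     (\<forall>i\<in>{1..s}. \<forall>j\<in>{1..s}. j < i \<longrightarrow> Ls i \<inter> Xs j = {})"

definition k_configuration :: "'k::field ppoint set \<Rightarrow> (nat \<Rightarrow> nat) \<Rightarrow> nat \<Rightarrow> bool" where
  "k_configuration X d s \<longleftrightarrow> finite X \<and> (\<exists>Xs Ls. defines_config X d s Xs Ls)"

end

theory Submission
  imports Defs
begin

text \<open>Two distinct lines meet in at most one point, so the line L_i of a configuration contains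
at most d_i + (s - i) \<le> d_s of its points. If it contains exactly d_s, it meets each later X_j
in exactly one point and d_i, ..., d_s are consecutive integers; then L_i can be moved to the last
position, with L_i \<inter> X as last subset, while L_(i+1), ..., L_s move down one place, each X_j
losing its point on L_i. Taking defining data whose final block of full lines is as long as
possible gives the claim.\<close>

definition cross3 :: "'k::field vec3 \<Rightarrow> 'k vec3 \<Rightarrow> 'k vec3" where
  "cross3 u z = (fst (snd u) * snd (snd z) - snd (snd u) * fst (snd z),
                 snd (snd u) * fst z - fst u * snd (snd z),
                 fst u * fst (snd z) - fst (snd u) * fst z)"

lemma cross3_cross3_eq_0:
  fixes a b c :: "'k::field vec3"
  assumes "dot3 a c = 0" "dot3 b c = 0"
  shows "cross3 (cross3 a b) c = (0,0,0)"
proof -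
  obtain a1 a2 a3 b1 b2 b3 where "a = (a1,a2,a3)" "b = (b1,b2,b3)"
    by (metis prod.collapse)
  then have "cross3 (cross3 a b) c = (b1 * dot3 a c - a1 * dot3 b c,
      b2 * dot3 a c - a2 * dot3 b c, b3 * dot3 a c - a3 * dot3 b c)"
    by (simp add: cross3_def dot3_def algebra_simps)
  with assms show ?thesis by simp
qed

lemma cross3_eq_0_imp_sc3:
  fixes u z :: "'k::field vec3"
  assumes "u \<noteq> (0,0,0)" "cross3 u z = (0,0,0)"
  shows "\<exists>c. z = sc3 c u"
proof -
  obtain u1 u2 u3 z1 z2 z3 where u: "u = (u1,u2,u3)" and z: "z = (z1,z2,z3)"
    by (metis prod.collapse)
  have e: "u2 * z3 = u3 * z2" "u3 * z1 = u1 * z3" "u1 * z2 = u2 * z1"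
    using assms(2) by (auto simp: u z cross3_def)
  consider "u1 \<noteq> 0" | "u2 \<noteq> 0" | "u3 \<noteq> 0" using assms(1) u by auto
  then show ?thesis
  proof cases
    case 1 with e show ?thesis by (intro exI[of _ "z1/u1"]) (auto simp: u z sc3_def field_simps)
  next
    case 2 with e show ?thesis by (intro exI[of _ "z2/u2"]) (auto simp: u z sc3_def field_simps)
  next
    case 3 with e show ?thesis by (intro exI[of _ "z3/u3"]) (auto simp: u z sc3_def field_simps)
  qed
qed

lemma sc3_sc3: "sc3 c (sc3 c' v) = sc3 (c * c') v"
  by (simp add: sc3_def mult.assoc)

lemma sc3_eq_0_iff: "sc3 c v = (0,0,0) \<longleftrightarrow> c = 0 \<or> v = (0,0,0)"
  by (cases v) (auto simp: sc3_def)

lemma dot3_sc3_left: "dot3 (sc3 c a) v = c * dot3 a v"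
  and dot3_sc3_right: "dot3 a (sc3 c v) = c * dot3 a v"
  by (auto simp: dot3_def sc3_def algebra_simps)

lemma proj_class_sc3:
  fixes v :: "'k::field vec3"
  assumes "c \<noteq> 0"
  shows "proj_class (sc3 c v) = proj_class v"
proof (intro set_eqI iffI)
  fix w assume "w \<in> proj_class (sc3 c v)"
  then obtain c' where "c' \<noteq> 0" "w = sc3 (c' * c) v"
    unfolding proj_class_def by (auto simp: sc3_sc3)
  moreover from this assms have "c' * c \<noteq> 0" by simp
  ultimately show "w \<in> proj_class v" unfolding proj_class_def by blast
next
  fix w assume "w \<in> proj_class v"
  then obtain c' where "c' \<noteq> 0" "w = sc3 (c' / c) (sc3 c v)"
    using assms unfolding proj_class_def by (auto simp: sc3_sc3)
  moreover from this assms have "c' / c \<noteq> 0" by simp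
  ultimately show "w \<in> proj_class (sc3 c v)" unfolding proj_class_def by blast
qed

lemma proj_class_dot3_iff:
  assumes "Rep_ppoint P = proj_class v"
  shows "(\<exists>w \<in> Rep_ppoint P. dot3 a w = 0) \<longleftrightarrow> dot3 a v = 0"
proof
  assume "\<exists>w \<in> Rep_ppoint P. dot3 a w = 0"
  then obtain c where "c \<noteq> 0" "dot3 a (sc3 c v) = 0"
    using assms by (auto simp: proj_class_def)
  then show "dot3 a v = 0" by (simp add: dot3_sc3_right)
next
  have "v = sc3 1 v" by (simp add: sc3_def)
  with assms have "v \<in> Rep_ppoint P" by (auto simp: proj_class_def intro!: exI[of _ 1])
  then show "dot3 a v = 0 \<Longrightarrow> \<exists>w \<in> Rep_ppoint P. dot3 a w = 0" by blast
qed

lemma distinct_lines_inter_unique: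
  fixes L M :: "'k::field ppoint set"
  assumes "is_line L" "is_line M" "L \<noteq> M" "P \<in> L \<inter> M" "Q \<in> L \<inter> M"
  shows "P = Q"
proof -
  obtain a where a: "a \<noteq> (0,0,0)" "L = {P. \<exists>v \<in> Rep_ppoint P. dot3 a v = 0}"
    using assms(1) unfolding is_line_def by blast
  obtain b where b: "b \<noteq> (0,0,0)" "M = {P. \<exists>v \<in> Rep_ppoint P. dot3 b v = 0}"
    using assms(2) unfolding is_line_def by blast
  have ab: "cross3 a b \<noteq> (0,0,0)"
  proof
    assume "cross3 a b = (0,0,0)"
    then obtain c where c: "b = sc3 c a" using cross3_eq_0_imp_sc3 a(1) by blast
    with b(1) have "c \<noteq> 0" by (auto simp: sc3_eq_0_iff)
    with a(2) b(2) c have "L = M" by (simp add: dot3_sc3_left)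
    with assms(3) show False by contradiction
  qed
  have "Rep_ppoint R = proj_class (cross3 a b)" if "R \<in> L \<inter> M" for R
  proof -
    obtain v where v: "v \<noteq> (0,0,0)" "Rep_ppoint R = proj_class v"
      using Rep_ppoint[of R] by auto
    have "dot3 a v = 0" "dot3 b v = 0" using that a b proj_class_dot3_iff[OF v(2)] by auto
    then obtain c where c: "v = sc3 c (cross3 a b)"
      using cross3_eq_0_imp_sc3[OF ab] cross3_cross3_eq_0 by blast
    with v have "c \<noteq> 0" by (auto simp: sc3_eq_0_iff)
    with v c show ?thesis by (simp add: proj_class_sc3)
  qed
  then show ?thesis using assms(4,5) by (metis Rep_ppoint_inject)
qed

lemma defines_configD:
  assumes "defines_config X d s Xs Ls"
  shows "config_type d s" "X = (\<Union>i\<in>{1..s}. Xs i)"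
    "\<And>i. i \<in> {1..s} \<Longrightarrow> is_line (Ls i)" "\<And>i. i \<in> {1..s} \<Longrightarrow> Xs i \<subseteq> X"
    "\<And>i. i \<in> {1..s} \<Longrightarrow> finite (Xs i)" "\<And>i. i \<in> {1..s} \<Longrightarrow> card (Xs i) = d i"
    "\<And>i. i \<in> {1..s} \<Longrightarrow> Xs i \<subseteq> Ls i" "inj_on Ls {1..s}"
    "\<And>i j. i \<in> {1..s} \<Longrightarrow> j \<in> {1..s} \<Longrightarrow> j < i \<Longrightarrow> Ls i \<inter> Xs j = {}"
  using assms unfolding defines_config_def by auto

lemma config_type_add_diff_le:
  assumes "config_type d s" "1 \<le> i" "i \<le> j" "j \<le> s"
  shows "d i + (j - i) \<le> d j"
  using assms(3,4)
proof (induction j rule: dec_induct)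
  case (step n)
  with assms(1,2) have "d n < d (Suc n)" unfolding config_type_def by simp
  with step show ?case by simp
qed simp

lemma line_inter_config:
  assumes dc: "defines_config X d s Xs Ls" and i: "i \<in> {1..s}"
  shows "Ls i \<inter> X = Xs i \<union> (\<Union>j\<in>{i<..s}. Ls i \<inter> Xs j)"
proof -
  note D = defines_configD[OF dc]
  have "Ls i \<inter> Xs j = {}" if "j \<in> {1..s}" "j < i" for j
    using D(9) i that by blast
  then show ?thesis using D(2) D(7)[OF i] i by fastforce
qed

lemma card_line_inter_points_le_1:
  assumes dc: "defines_config X d s Xs Ls" and ij: "i \<in> {1..s}" "j \<in> {1..s}" "i \<noteq> j"
  shows "card (Ls i \<inter> Xs j) \<le> 1"
proof -
  note D = defines_configD[OF dc]
  have "Ls i \<noteq> Ls j" using D(8) ij unfolding inj_on_def by blast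
  then have "P = Q" if "P \<in> Ls i \<inter> Xs j" "Q \<in> Ls i \<inter> Xs j" for P Q
    using distinct_lines_inter_unique[OF D(3)[OF ij(1)] D(3)[OF ij(2)]] D(7)[OF ij(2)] that
    by blast
  with D(5)[OF ij(2)] show ?thesis by (simp add: card_le_Suc0_iff_eq)
qed

lemma card_line_inter_le_sum:
  assumes dc: "defines_config X d s Xs Ls" and i: "i \<in> {1..s}"
  shows "card (Ls i \<inter> X) \<le> d i + (\<Sum>j\<in>{i<..s}. card (Ls i \<inter> Xs j))"
proof -
  have "card (Ls i \<inter> X) \<le> card (Xs i) + card (\<Union>j\<in>{i<..s}. Ls i \<inter> Xs j)"
    unfolding line_inter_config[OF dc i] by (rule card_Un_le)
  also have "card (\<Union>j\<in>{i<..s}. Ls i \<inter> Xs j) \<le> (\<Sum>j\<in>{i<..s}. card (Ls i \<inter> Xs j))"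
    by (rule card_UN_le) simp
  finally show ?thesis using defines_configD(6)[OF dc i] by simp
qed

lemma sum_card_line_inter_le:
  assumes dc: "defines_config X d s Xs Ls" and i: "i \<in> {1..s}"
  shows "(\<Sum>j\<in>{i<..s}. card (Ls i \<inter> Xs j)) \<le> s - i"
proof -
  have "(\<Sum>j\<in>{i<..s}. card (Ls i \<inter> Xs j)) \<le> (\<Sum>j\<in>{i<..s}. 1)"
    by (rule sum_mono) (use card_line_inter_points_le_1[OF dc] i in auto)
  then show ?thesis by simp
qed

lemma card_line_inter_le:
  assumes dc: "defines_config X d s Xs Ls" and i: "i \<in> {1..s}"
  shows "card (Ls i \<inter> X) \<le> d s"
  using card_line_inter_le_sum[OF dc i] sum_card_line_inter_le[OF dc i]
    config_type_add_diff_le[OF defines_configD(1)[OF dc], of i s] i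
  by fastforce

lemma card_last_line_inter:
  assumes dc: "defines_config X d s Xs Ls" and s: "1 \<le> s"
  shows "card (Ls s \<inter> X) = d s"
  using line_inter_config[OF dc] defines_configD(6)[OF dc] s by simp

lemma full_line_inter_points:
  assumes dc: "defines_config X d s Xs Ls" and i: "i \<in> {1..s}"
    and full: "card (Ls i \<inter> X) = d s" and j: "j \<in> {i<..s}"
  shows "card (Ls i \<inter> Xs j) = 1"
proof (rule ccontr)
  assume "card (Ls i \<inter> Xs j) \<noteq> 1"
  with card_line_inter_points_le_1[OF dc, of i j] i j have "card (Ls i \<inter> Xs j) < 1" by auto
  then have "(\<Sum>j\<in>{i<..s}. card (Ls i \<inter> Xs j)) < (\<Sum>j\<in>{i<..s}. 1)"
    by (intro sum_strict_mono_ex1) (use card_line_inter_points_le_1[OF dc] i j in auto)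
  with card_line_inter_le_sum[OF dc i] full
    config_type_add_diff_le[OF defines_configD(1)[OF dc], of i s] i
  show False by simp
qed

lemma full_line_type_step:
  assumes dc: "defines_config X d s Xs Ls" and i: "i \<in> {1..s}"
    and full: "card (Ls i \<inter> X) = d s" and k: "i \<le> k" "k < s"
  shows "d (Suc k) = Suc (d k)"
proof -
  note T = defines_configD(1)[OF dc]
  have "d s \<le> d i + (s - i)"
    using card_line_inter_le_sum[OF dc i] sum_card_line_inter_le[OF dc i] full by linarith
  moreover have "d i + (k - i) \<le> d k" "d (Suc k) + (s - Suc k) \<le> d s"
    using config_type_add_diff_le[OF T] i k by simp_all
  moreover have "d k < d (Suc k)" using T i k unfolding config_type_def by simp
  ultimately show ?thesis using k by linarith
qed

locale full_line =
  fixes X :: "'k::field ppoint set" and d :: "nat \<Rightarrow> nat" and s :: nat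
    and Xs Ls :: "nat \<Rightarrow> 'k ppoint set" and i :: nat
  assumes config: "defines_config X d s Xs Ls"
    and i: "1 \<le> i" "i < s"
    and full: "card (Ls i \<inter> X) = d s"
begin

definition move_index :: "nat \<Rightarrow> nat" where
  "move_index k = (if k < i then k else if k < s then Suc k else i)"

definition moved_lines :: "nat \<Rightarrow> 'k ppoint set" where
  "moved_lines = Ls \<circ> move_index"

definition moved_points :: "nat \<Rightarrow> 'k ppoint set" where
  "moved_points k =
     (if k < i then Xs k else if k < s then Xs (Suc k) - Ls i else Ls i \<inter> X)"

lemma moved_lines_last: "moved_lines s = Ls i"
  and moved_lines_shift: "i \<le> k \<Longrightarrow> k < s \<Longrightarrow> moved_lines k = Ls (Suc k)"
  using i by (simp_all add: moved_lines_def move_index_def)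

lemma move_index_in: "k \<in> {1..s} \<Longrightarrow> move_index k \<in> {1..s}"
  using i by (auto simp: move_index_def)

lemma inj_on_moved_lines: "inj_on moved_lines {1..s}"
proof -
  have "inj_on move_index {1..s}" using i unfolding inj_on_def move_index_def by auto
  moreover have "inj_on Ls (move_index ` {1..s})"
    using inj_on_subset[OF defines_configD(8)[OF config]] move_index_in by blast
  ultimately show ?thesis unfolding moved_lines_def by (rule comp_inj_on)
qed

lemma moved_points_subset:
  assumes k: "k \<in> {1..s}"
  shows "moved_points k \<subseteq> X"
  using defines_configD(4)[OF config, of k] defines_configD(4)[OF config, of "Suc k"] k
  by (auto simp: moved_points_def)

lemma Union_moved_points: "X = (\<Union>k\<in>{1..s}. moved_points k)"
proof (intro equalityI subsetI)
  note D = defines_configD[OF config]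
  fix x assume x: "x \<in> X"
  then obtain j where j: "j \<in> {1..s}" "x \<in> Xs j" using D(2) by blast
  consider "j < i" | "x \<in> Ls i" | "i < j" "x \<notin> Ls i"
    using j D(7)[of i] i by fastforce
  then show "x \<in> (\<Union>k\<in>{1..s}. moved_points k)"
  proof cases
    case 1 with j show ?thesis by (auto simp: moved_points_def)
  next
    case 2 with x i have "x \<in> moved_points s" by (simp add: moved_points_def)
    with i show ?thesis by auto
  next
    case 3 with j have "x \<in> moved_points (j - 1)" by (auto simp: moved_points_def)
    moreover have "j - 1 \<in> {1..s}" using 3 i j by auto
    ultimately show ?thesis by blast
  qed
next
  fix x assume "x \<in> (\<Union>k\<in>{1..s}. moved_points k)"
  then show "x \<in> X" using moved_points_subset by blast
qed

lemma card_moved_points: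
  assumes k: "k \<in> {1..s}"
  shows "card (moved_points k) = d k"
proof -
  note D = defines_configD[OF config]
  consider "k < i" | "i \<le> k" "k < s" | "k = s" using k by fastforce
  then show ?thesis
  proof cases
    case 1 with D(6)[OF k] show ?thesis by (simp add: moved_points_def)
  next
    case 2
    then have k1: "Suc k \<in> {1..s}" by simp
    have "card (Xs (Suc k) - Ls i) = card (Xs (Suc k)) - card (Ls i \<inter> Xs (Suc k))"
      using card_Diff_subset_Int[of "Xs (Suc k)" "Ls i"] D(5)[OF k1] by (simp add: Int_commute)
    also have "\<dots> = d k"
      using D(6)[OF k1] full_line_inter_points[OF config _ full, of "Suc k"]
        full_line_type_step[OF config _ full 2] i 2 by simp
    finally show ?thesis using 2 by (simp add: moved_points_def)
  next
    case 3 with full i show ?thesis by (simp add: moved_points_def)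
  qed
qed

lemma moved_points_subset_moved_lines: "k \<in> {1..s} \<Longrightarrow> moved_points k \<subseteq> moved_lines k"
  using defines_configD(7)[OF config, of k] defines_configD(7)[OF config, of "Suc k"]
  by (auto simp: moved_points_def moved_lines_def move_index_def)

lemma moved_lines_inter_earlier_points:
  assumes k: "k \<in> {1..s}" "k' \<in> {1..s}" "k' < k"
  shows "moved_lines k \<inter> moved_points k' = {}"
  using defines_configD(9)[OF config, of k k'] defines_configD(9)[OF config, of "Suc k" k']
    defines_configD(9)[OF config, of "Suc k" "Suc k'"] defines_configD(9)[OF config, of i k'] k i
  by (auto simp: moved_points_def moved_lines_def move_index_def)

lemma defines_config_moved: "defines_config X d s moved_points moved_lines"
proof -
  note D = defines_configD[OF config]
  have "finite X" using D(2) D(5) by auto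
  then have "finite (moved_points k)" if "k \<in> {1..s}" for k
    using moved_points_subset[OF that] by (rule finite_subset[rotated])
  moreover have "is_line (moved_lines k)" if "k \<in> {1..s}" for k
    using D(3)[OF move_index_in[OF that]] by (simp add: moved_lines_def)
  ultimately show ?thesis
    unfolding defines_config_def
    using D(1) Union_moved_points moved_points_subset card_moved_points
      moved_points_subset_moved_lines inj_on_moved_lines moved_lines_inter_earlier_points
    by blast
qed

end

lemma extend_full_suffix:
  assumes dc: "defines_config X d s Xs Ls" and r: "1 \<le> r"
    and suffix: "\<forall>j<r. card (Ls (s - j) \<inter> X) = d s"
    and i_range: "1 \<le> i" "i \<le> s - r" and full: "card (Ls i \<inter> X) = d s"
  shows "\<exists>Xs' Ls'. defines_config X d s Xs' Ls' \<and> (\<forall>j<Suc r. card (Ls' (s - j) \<inter> X) = d s)"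
proof -
  interpret full_line X d s Xs Ls i
    using dc i_range r full by unfold_locales auto
  have "card (moved_lines (s - j) \<inter> X) = d s" if j: "j < Suc r" for j
  proof (cases j)
    case 0 with full show ?thesis by (simp add: moved_lines_last)
  next
    case (Suc j')
    with j i_range have "moved_lines (s - j) = Ls (s - j')"
      using moved_lines_shift[of "s - j"] by (simp add: Suc_diff_Suc)
    with suffix Suc j show ?thesis by simp
  qed
  with defines_config_moved show ?thesis by blast
qed

theorem corollary2p11:
  fixes X :: "'k::field ppoint set" and d :: "nat \<Rightarrow> nat" and s :: nat
  assumes "alg_closed TYPE('k)"
    and "k_configuration X d s"
    and "s \<ge> 2"
  shows "\<exists>Xs Ls r. defines_config X d s Xs Ls \<and> 1 \<le> r \<and> r \<le> s \<and>
           (\<forall>j. j \<le> r - 1 \<longrightarrow> card (Ls (s - j) \<inter> X) = d s) \<and>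
           (\<forall>j. r \<le> j \<and> j \<le> s - 1 \<longrightarrow> card (Ls (s - j) \<inter> X) < d s)"
proof -
  define R where "R = {r. 1 \<le> r \<and> r \<le> s \<and> (\<exists>Xs Ls. defines_config X d s Xs Ls \<and>
                              (\<forall>j<r. card (Ls (s - j) \<inter> X) = d s))}"
  obtain Xs0 Ls0 where dc0: "defines_config X d s Xs0 Ls0"
    using assms(2) unfolding k_configuration_def by blast
  have "1 \<in> R" using dc0 card_last_line_inter[OF dc0] assms(3) by (auto simp: R_def)
  moreover have "finite R" by (rule finite_subset[of _ "{..s}"]) (auto simp: R_def)
  ultimately have "Max R \<in> R" and R_le_Max: "\<And>r. r \<in> R \<Longrightarrow> r \<le> Max R"
    using Max_in by auto
  define r where "r = Max R"
  from \<open>Max R \<in> R\<close> obtain Xs Ls where dc: "defines_config X d s Xs Ls" and r: "1 \<le> r" "r \<le> s"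
    and suffix: "\<forall>j<r. card (Ls (s - j) \<inter> X) = d s"
    unfolding R_def r_def by blast
  have "card (Ls (s - j) \<inter> X) < d s" if j: "r \<le> j" "j \<le> s - 1" for j
  proof -
    have "card (Ls (s - j) \<inter> X) \<noteq> d s"
    proof
      assume "card (Ls (s - j) \<inter> X) = d s"
      moreover have "1 \<le> s - j" "s - j \<le> s - r" using j r by auto
      ultimately obtain Xs' Ls' where "defines_config X d s Xs' Ls'"
        and "\<forall>j<Suc r. card (Ls' (s - j) \<inter> X) = d s"
        using extend_full_suffix[OF dc r(1) suffix] by blast
      with j r have "Suc r \<in> R" unfolding R_def by auto
      then show False using R_le_Max r_def by fastforce
    qed
    with card_line_inter_le[OF dc, of "s - j"] j r show ?thesis by fastforce
  qed
  with dc r suffix show ?thesis by (intro exI[of _ Xs] exI[of _ Ls] exI[of _ r]) auto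
qed

end
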